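(* Let $\kappa_l=1$ for all $l\ge1$, and for even $N\ge4$ let $\gamma_0(N)=\sum_{n=0}^{N-1}|f_N(k_n)|$ with $f_N(k)=2\sum_{l=1}^{N/2-1}\sin(kl)+1$ and $k_n=(2n+1)\pi/N$. Then there exist constants $0<c\le C$ and $N_0$ such that $c\,N\ln N\le\gamma_0(N)\le C\,N\ln N$ for all even $N\ge N_0$. Consequently $I_0(\Delta)=[\gamma_0(N)/2]^2T^2$ scales as $T^2N^2(\ln N)^2$ (super-Heisenberg scaling).
   Context: $T>0$ is the probe time; $I_0(\Delta)=[\gamma_0(N)/2]^2T^2$ is the optimally controlled quantum Fisher information for estimating the pairing strength $\Delta$ in the long-range Kitaev chain with decay law $\kappa_l$. *)

theory Defs
  imports "HOL-Analysis.Analysis"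
begin

text \<open>Decay law kappa_l = 1 for all l >= 1 is built in: the couplings all equal 1.\<close>

definition fN :: "nat \<Rightarrow> real \<Rightarrow> real" where
  "fN N k = 2 * (\<Sum>l = 1..N div 2 - 1. sin (k * real l)) + 1"

definition kn :: "nat \<Rightarrow> nat \<Rightarrow> real" where
  "kn N n = (2 * real n + 1) * pi / real N"

definition gamma0 :: "nat \<Rightarrow> real" where
  "gamma0 N = (\<Sum>n<N. \<bar>fN N (kn N n)\<bar>)"

definition I0 :: "nat \<Rightarrow> real \<Rightarrow> real" where
  "I0 N T = (gamma0 N / 2)^2 * T^2"

end

theory Submission
  imports Defs
begin

text \<open>Summing the telescoping identity \<open>2 sin(k/2) sin(k l) = cos((l - 1/2) k) - cos((l + 1/2) k)\<close>
  gives the closed form \<open>f\<^sub>N(k\<^sub>n) = cot(k\<^sub>n/2) + 1 - sin(N k\<^sub>n/2)\<close>, the last term being \<open>\<plusminus>1\<close>.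
  With \<open>x = k\<^sub>n/2 = (2n+1)\<pi>/(2N)\<close>, the bound \<open>1/sin x \<le> 2/x + 2/(\<pi> - x)\<close> controls every
  summand by \<open>2 + 2N/(n+1) + 2N/(N-n)\<close>, so \<open>\<gamma>\<^sub>0(N)\<close> is at most \<open>2N + 4N H(N) = O(N ln N)\<close>.
  Conversely, for \<open>n < N/4\<close> one has \<open>cot x \<ge> 1/(2x)\<close>, and these terms alone sum to
  \<open>N/(2\<pi>) H(N/4) \<ge> N ln N / (4\<pi>)\<close>.\<close>

lemma sin_half_mult_sum_sin:
  "2 * sin (k/2) * (\<Sum>l = 1..m. sin (k * real l)) = cos (k/2) - cos ((real m + 1/2) * k)"
proof (induction m)
  case 0
  then show ?case by simp
next
  case (Suc m)
  have "2 * sin (k/2) * sin (k * real (Suc m))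
          = cos (k * real (Suc m) - k/2) - cos (k * real (Suc m) + k/2)"
    by (simp only: cos_add cos_diff) simp
  also have "\<dots> = cos ((real m + 1/2) * k) - cos ((real (Suc m) + 1/2) * k)"
    by (simp add: algebra_simps)
  finally show ?case
    using Suc by (simp add: distrib_left)
qed

lemma kn_half_bounds:
  assumes "n < N"
  shows "0 < kn N n / 2" and "kn N n / 2 < pi"
proof -
  show "0 < kn N n / 2"
    using assms by (simp add: kn_def)
  have "(2 * real n + 1) * pi < (2 * real N) * pi"
    using assms by (intro mult_strict_right_mono) auto
  then show "kn N n / 2 < pi"
    using assms by (simp add: kn_def field_simps)
qed

lemma fN_kn_eq:
  assumes "even N" "n < N"
  shows "fN N (kn N n) = cos (kn N n / 2) / sin (kn N n / 2) + 1 - sin (real (N div 2) * kn N n)"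
proof -
  define k where "k = kn N n"
  define M where "M = N div 2"
  have "M \<ge> 1" and N_eq: "real N = 2 * real M"
    using assms unfolding M_def by auto
  then have "real M * k = real n * pi + pi/2"
    unfolding k_def kn_def by (simp add: field_simps)
  then have cos_Mk: "cos (real M * k) = 0"
    by (simp add: cos_add)
  have sin_pos: "sin (k/2) > 0"
    using kn_half_bounds[OF assms(2)] sin_gt_zero unfolding k_def by blast
  have "real (M - 1) + 1/2 = real M - 1/2"
    using \<open>M \<ge> 1\<close> by (simp add: of_nat_diff)
  then have "cos ((real (M - 1) + 1/2) * k) = sin (real M * k) * sin (k/2)"
    by (simp add: left_diff_distrib cos_diff cos_Mk)
  then have "2 * (\<Sum>l = 1..M - 1. sin (k * real l)) = cos (k/2) / sin (k/2) - sin (real M * k)"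
    using sin_half_mult_sum_sin[of k "M - 1"] sin_pos by (simp add: field_simps)
  then show ?thesis
    unfolding fN_def k_def M_def by simp
qed

lemma mult_cos_le_sin:
  fixes x :: real
  assumes "0 < x" "x \<le> pi"
  shows "x * cos x \<le> sin x"
proof -
  obtain z where z: "0 < z" "z < x" "sin x - sin 0 = (x - 0) * cos z"
    using MVT2[of 0 x sin cos] assms by (auto intro: DERIV_sin)
  have "cos x \<le> cos z"
    using z assms by (intro cos_monotone_0_pi_le) auto
  then show ?thesis
    using z assms by (simp add: mult_left_mono)
qed

lemma half_le_sin:
  fixes x :: real
  assumes "0 < x" "x \<le> pi/2"
  shows "x/2 \<le> sin x"
proof -
  have "x * cos (x/2) * cos (x/2) = 2 * ((x/2) * cos (x/2)) * cos (x/2)"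
    by simp
  also have "\<dots> \<le> 2 * sin (x/2) * cos (x/2)"
    using assms mult_cos_le_sin[of "x/2"] cos_ge_zero[of "x/2"] by (intro mult_right_mono) auto
  also have "\<dots> = sin x"
    using sin_double[of "x/2"] by simp
  finally have "x * ((1 + cos x) / 2) \<le> sin x"
    using cos_double_cos[of "x/2"] by (simp add: power2_eq_square algebra_simps)
  moreover have "x * (1/2) \<le> x * ((1 + cos x) / 2)"
    using assms cos_ge_zero[of x] by (intro mult_left_mono) auto
  ultimately show ?thesis
    by simp
qed

lemma inverse_sin_le:
  fixes x :: real
  assumes "0 < x" "x < pi"
  shows "1 / sin x \<le> 2 / x + 2 / (pi - x)"
proof (cases "x \<le> pi/2")
  case True
  then have "1 / sin x \<le> 1 / (x/2)"
    using assms half_le_sin[of x] by (intro divide_left_mono) auto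
  also have "\<dots> \<le> 2 / x + 2 / (pi - x)"
    using assms by simp
  finally show ?thesis .
next
  case False
  then have "1 / sin x \<le> 1 / ((pi - x)/2)"
    using assms half_le_sin[of "pi - x"] by (intro divide_left_mono) auto
  also have "\<dots> \<le> 2 / x + 2 / (pi - x)"
    using assms by simp
  finally show ?thesis .
qed

text \<open>For \<open>x = (2n+1)\<pi>/(2N)\<close> both \<open>2/x\<close> and \<open>2/(\<pi> - x)\<close> equal \<open>2N \<cdot> 2/((2a - 1)\<pi>)\<close>,
  with \<open>a = n + 1\<close> resp. \<open>a = N - n\<close>.\<close>

lemma two_div_odd_pi_le:
  fixes a :: real
  assumes "1 \<le> a"
  shows "2 / ((2 * a - 1) * pi) \<le> 1 / a"
proof -
  have "2 * a \<le> (2 * a - 1) * 3"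
    using assms by simp
  also have "\<dots> \<le> (2 * a - 1) * pi"
    using assms pi_gt3 by (intro mult_left_mono) auto
  finally show ?thesis
    using assms by (simp add: divide_simps)
qed

lemma harm_le_one_plus_ln:
  assumes "n \<ge> 1"
  shows "harm n \<le> 1 + ln (real n)"
  using euler_mascheroni_sequence_decreasing[of 1 n] assms by (simp add: harm_def)

lemma sum_inverse_Suc_eq_harm: "(\<Sum>n<N. 1 / (real n + 1)) = (harm N :: real)"
  by (simp add: harm_altdef inverse_eq_divide add.commute)

lemma sum_inverse_diff_eq_harm: "(\<Sum>n<N. 1 / (real N - real n)) = (harm N :: real)"
proof -
  have "(\<Sum>n<N. 1 / (real n + 1)) = (\<Sum>n<N. 1 / (real (N - Suc n) + 1))"
    using sum.atLeastLessThan_rev[of "\<lambda>n. 1 / (real n + 1)" 0 N] by (simp add: lessThan_atLeast0)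
  also have "\<dots> = (\<Sum>n<N. 1 / (real N - real n))"
    by (intro sum.cong) (auto simp: of_nat_diff)
  finally show ?thesis
    using sum_inverse_Suc_eq_harm by simp
qed

lemma abs_fN_kn_le:
  assumes "even N" "n < N"
  shows "\<bar>fN N (kn N n)\<bar> \<le> 2 + 2 * real N / (real n + 1) + 2 * real N / (real N - real n)"
proof -
  define x where "x = kn N n / 2"
  have x_bounds: "0 < x" "x < pi"
    using kn_half_bounds[OF assms(2)] unfolding x_def by auto
  have x_eq: "x = (2 * (real n + 1) - 1) * pi / (2 * real N)"
    and pi_minus_x_eq: "pi - x = (2 * (real N - real n) - 1) * pi / (2 * real N)"
    using assms(2) unfolding x_def kn_def by (auto simp: field_simps)
  have "\<bar>cos x / sin x\<bar> = \<bar>cos x\<bar> / sin x"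
    using sin_gt_zero[OF x_bounds] by (simp add: abs_divide)
  then have "\<bar>fN N (kn N n)\<bar> \<le> \<bar>cos x\<bar> / sin x + 2"
    using fN_kn_eq[OF assms] abs_sin_le_one[of "real (N div 2) * kn N n"]
    unfolding x_def by linarith
  also have "\<bar>cos x\<bar> / sin x \<le> 1 / sin x"
    using sin_gt_zero[OF x_bounds] abs_cos_le_one[of x] by (intro divide_right_mono) auto
  also have "\<dots> \<le> 2 / x + 2 / (pi - x)"
    using x_bounds by (rule inverse_sin_le)
  also have "2 / x = 2 * real N * (2 / ((2 * (real n + 1) - 1) * pi))"
    unfolding x_eq by simp
  also have "\<dots> \<le> 2 * real N * (1 / (real n + 1))"
    by (intro mult_left_mono two_div_odd_pi_le) auto
  also have "2 / (pi - x) = 2 * real N * (2 / ((2 * (real N - real n) - 1) * pi))"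
    unfolding pi_minus_x_eq by simp
  also have "\<dots> \<le> 2 * real N * (1 / (real N - real n))"
    using assms(2) by (intro mult_left_mono two_div_odd_pi_le) auto
  finally show ?thesis
    by simp
qed

lemma abs_fN_kn_ge:
  assumes "even N" "n < N div 4"
  shows "real N / (2 * pi * (real n + 1)) \<le> \<bar>fN N (kn N n)\<bar>"
proof -
  define x where "x = kn N n / 2"
  have "n < N"
    using assms by simp
  have x_eq: "x = (2 * real n + 1) * pi / (2 * real N)"
    unfolding x_def kn_def by simp
  have "0 < x"
    using kn_half_bounds[OF \<open>n < N\<close>] unfolding x_def by simp
  have "(2 * real n + 1) * 4 \<le> 2 * real N"
    using assms by simp
  then have "(2 * real n + 1) * pi * 4 \<le> 2 * real N * pi"
    by (simp add: mult.commute mult.left_commute)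
  then have "x \<le> pi/4"
    using \<open>n < N\<close> unfolding x_eq by (simp add: field_simps)
  have "cos x \<ge> 1/2"
    using cos_monotone_0_pi_le[of x "pi/3"] cos_60 \<open>0 < x\<close> \<open>x \<le> pi/4\<close> by auto
  have "real N / (2 * pi * (real n + 1)) \<le> (1/2) / x"
    using \<open>n < N\<close> unfolding x_eq by (simp add: divide_simps)
  also have "\<dots> \<le> cos x / sin x"
    using \<open>0 < x\<close> \<open>x \<le> pi/4\<close> \<open>cos x \<ge> 1/2\<close> sin_gt_zero[of x] sin_x_le_x[of x]
    by (intro frac_le) auto
  also have "\<dots> \<le> \<bar>fN N (kn N n)\<bar>"
    using fN_kn_eq[OF assms(1) \<open>n < N\<close>] sin_le_one[of "real (N div 2) * kn N n"]
    unfolding x_def by linarith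
  finally show ?thesis .
qed

lemma gamma0_le:
  assumes "even N" "N \<ge> 3"
  shows "gamma0 N \<le> 10 * real N * ln (real N)"
proof -
  have "1 \<le> ln (real N)"
    using ln_ge_iff[of "real N" 1] exp_le assms by simp
  have "gamma0 N \<le> (\<Sum>n<N. 2 + 2 * real N / (real n + 1) + 2 * real N / (real N - real n))"
    unfolding gamma0_def using abs_fN_kn_le[OF assms(1)] by (intro sum_mono) auto
  also have "\<dots> = 2 * real N + 2 * real N * (\<Sum>n<N. 1 / (real n + 1))
                      + 2 * real N * (\<Sum>n<N. 1 / (real N - real n))"
    by (simp add: sum.distrib sum_distrib_left)
  also have "\<dots> = 2 * real N + 4 * real N * harm N"
    by (simp only: sum_inverse_Suc_eq_harm sum_inverse_diff_eq_harm)
  also have "\<dots> \<le> 2 * real N + 4 * real N * (1 + ln (real N))"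
    using harm_le_one_plus_ln[of N] assms by (intro add_left_mono mult_left_mono) auto
  also have "\<dots> \<le> 10 * real N * ln (real N)"
    using mult_left_mono[OF \<open>1 \<le> ln (real N)\<close>, of "real N"] by (simp add: algebra_simps)
  finally show ?thesis .
qed

lemma gamma0_ge:
  assumes "even N" "N \<ge> 16"
  shows "1 / (4 * pi) * real N * ln (real N) \<le> gamma0 N"
proof -
  define m where "m = N div 4"
  have "real N / 4 \<le> real m + 1"
    unfolding m_def by linarith
  then have "ln (real N) - ln 4 \<le> ln (real m + 1)"
    using assms ln_mono[of "real N / 4" "real m + 1"] by (simp add: ln_div)
  moreover have "ln 16 \<le> ln (real N)"
    using assms by simp
  then have "2 * ln 4 \<le> ln (real N)"
    using ln_mult[of 4 4] by simp
  ultimately have "ln (real N) / 2 \<le> harm m"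
    using ln_le_harm[of m] by linarith
  then have "1 / (4 * pi) * real N * ln (real N) \<le> real N / (2 * pi) * harm m"
    using mult_left_mono[of "ln (real N) / 2" "harm m" "real N / (2 * pi)"] by simp
  also have "\<dots> = (\<Sum>n<m. real N / (2 * pi * (real n + 1)))"
    by (simp add: sum_distrib_left flip: sum_inverse_Suc_eq_harm)
  also have "\<dots> \<le> (\<Sum>n<m. \<bar>fN N (kn N n)\<bar>)"
    using abs_fN_kn_ge[OF assms(1)] unfolding m_def by (intro sum_mono) auto
  also have "\<dots> \<le> gamma0 N"
    unfolding gamma0_def m_def by (intro sum_mono2) auto
  finally show ?thesis .
qed

lemma I0_bounds:
  assumes "0 \<le> c * L" "c * L \<le> gamma0 N" "gamma0 N \<le> C * L"
  shows "(c/2)^2 * T^2 * L^2 \<le> I0 N T \<and> I0 N T \<le> (C/2)^2 * T^2 * L^2"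
proof -
  have scale: "(a/2)^2 * T^2 * L^2 = (a * L / 2)^2 * T^2" for a :: real
    by (simp add: power_mult_distrib power_divide)
  have "(c * L / 2)^2 \<le> (gamma0 N / 2)^2" and "(gamma0 N / 2)^2 \<le> (C * L / 2)^2"
    using assms by (auto intro!: power_mono)
  then show ?thesis
    unfolding I0_def scale by (intro conjI mult_right_mono) auto
qed

theorem mainTheorem6:
  shows "\<exists>c C (N0::nat). 0 < c \<and> c \<le> C \<and>
           (\<forall>N. even N \<and> N \<ge> 4 \<and> N \<ge> N0 \<longrightarrow>
              c * real N * ln (real N) \<le> gamma0 N \<and>
              gamma0 N \<le> C * real N * ln (real N)) \<and>
           (\<forall>N T. even N \<and> N \<ge> 4 \<and> N \<ge> N0 \<and> T > 0 \<longrightarrow>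
              (c/2)^2 * T^2 * (real N)^2 * (ln (real N))^2 \<le> I0 N T \<and>
              I0 N T \<le> (C/2)^2 * T^2 * (real N)^2 * (ln (real N))^2)"
proof -
  define c :: real where "c = 1 / (4 * pi)"
  define C :: real where "C = 10"
  have "0 < c" "c \<le> C"
    unfolding c_def C_def using pi_gt3 by (auto simp: field_simps)
  have gamma0_bounds: "c * real N * ln (real N) \<le> gamma0 N \<and> gamma0 N \<le> C * real N * ln (real N)"
    if "even N" "N \<ge> 16" for N
    unfolding c_def C_def using gamma0_ge gamma0_le that by auto
  have "(c/2)^2 * T^2 * (real N)^2 * (ln (real N))^2 \<le> I0 N T \<and>
        I0 N T \<le> (C/2)^2 * T^2 * (real N)^2 * (ln (real N))^2"
    if "even N" "N \<ge> 16" for N T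
    using I0_bounds[of c "real N * ln (real N)" N C T] gamma0_bounds[OF that] \<open>0 < c\<close> that
    by (simp add: power_mult_distrib mult.assoc)
  then show ?thesis
    using \<open>0 < c\<close> \<open>c \<le> C\<close> gamma0_bounds by (intro exI[of _ c] exI[of _ C] exI[of _ 16]) auto
qed

end
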